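(* Fix $\epsilon>0$ and $\alpha\in(1,\infty)$. Let $c:\mathbb{R}\to[0,\infty)$ satisfy $c(z)=c(-z)$ and $c(z)\le c(a)+c(z-a)$ for all $z,a\in\mathbb{R}$, let $\eta(\theta)=\kappa/\theta$ for a constant $\kappa>0$, and for $\theta>0$ let $N\sim\mathrm{Exp}(\theta)$ denote noise with density $P_N(z)= e^{-\eta(\theta)c(z)}/\int e^{-\eta(\theta)c(u)}\,\mathrm{d}u$ (assumed normalizable). For each prior $\rho$ and pair $(s_i,s_j)\in\mathbb{S}$, let $\pi^*_{i,j,\rho}$ be the comonotone coupling of $P_{X|s_i,\rho}$ and $P_{X|s_j,\rho}$ and suppose $\theta_{i,j,\rho}>0$ satisfies $$\int e^{\alpha\,\eta(\theta_{i,j,\rho})\,c(x-x')}\,\mathrm{d}\pi^*_{i,j,\rho}(x,x')=e^{(\alpha-1)\epsilon}.$$ Let $\theta$ be the maximum of $\theta_{i,j,\rho}$ over all $(s_i,s_j)\in\mathbb{S}$ and all $\rho$ (assumed to exist). Then releasing $Y=X+N$ with $N\sim\mathrm{Exp}(\theta)$ independent of $(X,S)$ attains $(\alpha,\epsilon)$-Rényi pufferfish privacy.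
   Context: Setting: a sensitive secret $S$ and real-valued data $X$. For each secret value $s$ and each adversarial prior belief $\rho$ (ranging over a given set of priors), $X$ given $S=s$ has a density $P_{X|s,\rho}$ on $\mathbb{R}$. $\mathbb{S}$ is a given set of ordered secret pairs. The released data is $Y=X+N$ with $N$ independent of $(X,S)$, so $P_{Y|S}(y|s,\rho)=\int P_N(y-x)P_{X|S}(x|s,\rho)\,\mathrm{d}x$. For densities $P\ll Q$, $D_\alpha(P\|Q)=\frac{1}{\alpha-1}\log\int P^\alpha Q^{1-\alpha}$. $Y$ satisfies $(\alpha,\epsilon)$-Rényi pufferfish privacy if $D_\alpha(P_{Y|s_i,\rho}\|P_{Y|s_j,\rho})\le\epsilon$ for all $\rho$ and all $(s_i,s_j)\in\mathbb{S}$. The comonotone (Kantorovich optimal) coupling of two distributions on $\mathbb{R}$ with CDFs $F_i,F_j$ is the joint distribution with joint CDF $\min\{F_i(x),F_j(x')\}$, i.e. the law of $(F_i^{-1}(U),F_j^{-1}(U))$, $U\sim\mathrm{Unif}(0,1)$. The paper only specifies $\eta(\theta)\propto 1/\theta$. *)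

theory Defs
  imports "HOL-Probability.Probability"
begin

definition cdf_of :: "(real \<Rightarrow> real) \<Rightarrow> real \<Rightarrow> real" where
  "cdf_of P x = (LINT t:{..x}|lborel. P t)"

definition quantile :: "(real \<Rightarrow> real) \<Rightarrow> real \<Rightarrow> real" where
  "quantile F u = Inf {x. u \<le> F x}"

definition comonotone_coupling :: "(real \<Rightarrow> real) \<Rightarrow> (real \<Rightarrow> real) \<Rightarrow> (real \<times> real) measure" where
  "comonotone_coupling P Q =
     distr (uniform_measure lborel {0<..<1}) borel
       (\<lambda>u. (quantile (cdf_of P) u, quantile (cdf_of Q) u))"

definition eta :: "real \<Rightarrow> real \<Rightarrow> real" where
  "eta \<kappa> \<theta> = \<kappa> / \<theta>"

definition noise_density :: "(real \<Rightarrow> real) \<Rightarrow> real \<Rightarrow> real \<Rightarrow> real \<Rightarrow> real" where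
  "noise_density c \<kappa> \<theta> z =
     exp (- eta \<kappa> \<theta> * c z) / (LINT u|lborel. exp (- eta \<kappa> \<theta> * c u))"

definition output_density :: "(real \<Rightarrow> real) \<Rightarrow> (real \<Rightarrow> real) \<Rightarrow> real \<Rightarrow> real" where
  "output_density PN PX y = (LINT x|lborel. PN (y - x) * PX x)"

definition renyi_div :: "real \<Rightarrow> (real \<Rightarrow> real) \<Rightarrow> (real \<Rightarrow> real) \<Rightarrow> ereal" where
  "renyi_div \<alpha> P Q =
    (let I = (\<integral>\<^sup>+ x. ennreal (P x powr \<alpha> * Q x powr (1 - \<alpha>)) \<partial>lborel) in
     if I = \<infinity> then \<infinity> else ereal (ln (enn2real I) / (\<alpha> - 1)))"

definition renyi_pufferfish_private ::
  "real \<Rightarrow> real \<Rightarrow> ('s \<times> 's) set \<Rightarrow> 'r set \<Rightarrow> ('s \<Rightarrow> 'r \<Rightarrow> real \<Rightarrow> real) \<Rightarrow> bool" where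
  "renyi_pufferfish_private \<alpha> \<epsilon> SS Rho PY \<longleftrightarrow>
     (\<forall>\<rho>\<in>Rho. \<forall>(si, sj)\<in>SS. renyi_div \<alpha> (PY si \<rho>) (PY sj \<rho>) \<le> ereal \<epsilon>)"

end

(*
  The comonotone coupling pi of P_{X|s_i} and P_{X|s_j} exists by the quantile transform, and it
  writes both output densities as mixtures of shifted noise over one measure:
  P_{Y|s_i}(y) = int P_N(y - x) dpi(x, x') and P_{Y|s_j}(y) = int P_N(y - x') dpi(x, x').
  Joint convexity of (a, b) |-> a^alpha b^(1 - alpha) and Fubini bound the Renyi integral by
  int int P_N(y - x)^alpha P_N(y - x')^(1 - alpha) dy dpi, and the triangle inequality for c
  bounds the inner integral by exp((alpha - 1) eta(theta) c(x - x')). Since theta is maximal,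
  (alpha - 1) eta(theta) <= alpha eta(theta_{i,j,rho}), so the defining equation of
  theta_{i,j,rho} bounds the whole by exp((alpha - 1) epsilon).
*)
theory Submission
  imports Defs
begin

lemma (in real_distribution) borel_measurable_quantile_cdf:
  "quantile (cdf M) \<in> borel_measurable borel"
proof -
  interpret cdf_distribution M ..
  have low: "quantile (cdf M) u = Inf UNIV" if "u \<le> 0" for u
  proof -
    have "{x. u \<le> cdf M x} = UNIV" using that cdf_nonneg by (metis UNIV_eq_I mem_Collect_eq order_trans)
    then show ?thesis unfolding quantile_def by (rule arg_cong)
  qed
  have high: "quantile (cdf M) u = Inf {}" if "u > 1" for u
  proof -
    have "{x. u \<le> cdf M x} = {}" using that cdf_bounded_prob by (metis empty_Collect_eq le_less_trans not_le)
    then show ?thesis unfolding quantile_def by (rule arg_cong)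
  qed
  show ?thesis
  proof (rule borel_measurable_piecewise_mono[where C="{{..0}, {0<..<1}, {1}, {1<..}}"])
    fix A assume "A \<in> {{..0}, {0<..<1::real}, {1}, {1<..}}"
    then consider "A = {..0}" | "A = {0<..<1}" | "A = {1}" | "A = {1<..}" by blast
    then show "mono_on A (quantile (cdf M))"
    proof cases
      case 2 then show ?thesis using mono_I by (simp add: quantile_def[abs_def])
    qed (auto intro!: mono_onI simp: low high)
  qed (auto simp: not_le)
qed

text \<open>The library's Skorohod construction (locale cdf_distribution) provides the quantile
  transform over restrict_space; the uniform measure only differs from it in its space.\<close>
lemma (in real_distribution) distr_uniform_quantile_cdf:
  "distr (uniform_measure lborel {0<..<1}) borel (quantile (cdf M)) = M"
proof -
  interpret cdf_distribution M ..
  note q_meas[measurable] = borel_measurable_quantile_cdf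
  have "distr (uniform_measure lborel {0<..<1}) borel (quantile (cdf M))
      = distr (restrict_space lborel {0<..<1::real}) borel (quantile (cdf M))"
  proof (rule measure_eqI)
    fix A :: "real set" assume "A \<in> sets (distr (uniform_measure lborel {0<..<1}) borel (quantile (cdf M)))"
    then have A: "A \<in> sets borel" by simp
    have q_meas_R: "quantile (cdf M) \<in> borel_measurable (restrict_space lborel {0<..<1})"
      by (rule measurable_restrict_space1) simp
    have q_meas_U: "quantile (cdf M) \<in> borel_measurable (uniform_measure lborel {0<..<1})"
      by (simp add: measurable_cong_sets[OF sets_uniform_measure refl])
    have pre: "quantile (cdf M) -` A \<in> sets lborel"
      using measurable_sets_borel[OF q_meas A] by simp
    have "emeasure (distr (uniform_measure lborel {0<..<1}) borel (quantile (cdf M))) A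
        = emeasure lborel ({0<..<1} \<inter> quantile (cdf M) -` A) / emeasure lborel {0<..<1::real}"
      using emeasure_distr[OF q_meas_U A] pre by simp
    also have "\<dots> = emeasure (distr (restrict_space lborel {0<..<1::real}) borel (quantile (cdf M))) A"
      using emeasure_distr[OF q_meas_R A] pre
      by (simp add: emeasure_restrict_space space_restrict_space divide_ennreal_def Int_commute)
    finally show "emeasure (distr (uniform_measure lborel {0<..<1}) borel (quantile (cdf M))) A
        = emeasure (distr (restrict_space lborel {0<..<1::real}) borel (quantile (cdf M))) A" .
  qed simp
  also have "\<dots> = M"
    using distr_I_eq_M unfolding quantile_def[abs_def] .
  finally show ?thesis .
qed

definition prob_density :: "(real \<Rightarrow> real) \<Rightarrow> bool" where
  "prob_density P \<longleftrightarrow> P \<in> borel_measurable borel \<and> (\<forall>x. 0 \<le> P x) \<and> (\<integral>\<^sup>+ x. ennreal (P x) \<partial>lborel) = 1"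

definition is_coupling :: "(real \<times> real) measure \<Rightarrow> (real \<Rightarrow> real) \<Rightarrow> (real \<Rightarrow> real) \<Rightarrow> bool" where
  "is_coupling \<pi> P Q \<longleftrightarrow> sets \<pi> = sets borel \<and>
     distr \<pi> borel fst = density lborel P \<and> distr \<pi> borel snd = density lborel Q"

lemma borel_measurable_fst_borel [measurable]:
    "fst \<in> measurable (borel :: ('a::second_countable_topology \<times> 'b::second_countable_topology) measure) borel"
  and borel_measurable_snd_borel [measurable]:
    "snd \<in> measurable (borel :: ('a::second_countable_topology \<times> 'b::second_countable_topology) measure) borel"
  unfolding borel_prod[symmetric] by simp_all

lemma real_distribution_density:
  assumes "prob_density P"
  shows "real_distribution (density lborel P)"
  using assms by (auto intro!: prob_spaceI simp: real_distribution_def real_distribution_axioms_def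
      prob_density_def emeasure_density)

lemma cdf_of_eq_cdf:
  assumes "prob_density P"
  shows "cdf_of P = cdf (density lborel P)"
proof
  fix x
  have [measurable]: "P \<in> borel_measurable borel" and nonneg: "\<And>x. 0 \<le> P x"
    using assms by (auto simp: prob_density_def)
  have "cdf (density lborel P) x = enn2real (\<integral>\<^sup>+ t. ennreal (P t) * indicator {..x} t \<partial>lborel)"
    by (simp add: cdf_def measure_def emeasure_density)
  also have "\<dots> = enn2real (\<integral>\<^sup>+ t. ennreal (indicator {..x} t * P t) \<partial>lborel)"
    by (intro arg_cong[where f=enn2real] nn_integral_cong) (auto simp: indicator_def)
  also have "\<dots> = cdf_of P x"
    unfolding cdf_of_def set_lebesgue_integral_def
    by (subst integral_eq_nn_integral) (auto simp: nonneg)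
  finally show "cdf_of P x = cdf (density lborel P) x" by simp
qed

lemma borel_measurable_quantile_cdf_of:
  assumes "prob_density P"
  shows "quantile (cdf_of P) \<in> borel_measurable borel"
  using real_distribution.borel_measurable_quantile_cdf[OF real_distribution_density[OF assms]]
  by (simp add: cdf_of_eq_cdf[OF assms])

lemma distr_uniform_quantile_cdf_of:
  assumes "prob_density P"
  shows "distr (uniform_measure lborel {0<..<1}) borel (quantile (cdf_of P)) = density lborel P"
  using real_distribution.distr_uniform_quantile_cdf[OF real_distribution_density[OF assms]]
  by (simp add: cdf_of_eq_cdf[OF assms])

lemma is_coupling_comonotone_coupling:
  assumes P: "prob_density P" and Q: "prob_density Q"
  shows "is_coupling (comonotone_coupling P Q) P Q"
proof -
  let ?U = "uniform_measure lborel {0<..<1::real}"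
  have [measurable]: "quantile (cdf_of P) \<in> borel_measurable ?U" "quantile (cdf_of Q) \<in> borel_measurable ?U"
    using borel_measurable_quantile_cdf_of[OF P] borel_measurable_quantile_cdf_of[OF Q]
    by (simp_all add: measurable_cong_sets[OF sets_uniform_measure refl])
  have "distr (comonotone_coupling P Q) borel fst = distr ?U borel (quantile (cdf_of P))"
    unfolding comonotone_coupling_def by (subst distr_distr) (auto simp: comp_def)
  moreover have "distr (comonotone_coupling P Q) borel snd = distr ?U borel (quantile (cdf_of Q))"
    unfolding comonotone_coupling_def by (subst distr_distr) (auto simp: comp_def)
  ultimately show ?thesis
    by (simp add: is_coupling_def comonotone_coupling_def
        distr_uniform_quantile_cdf_of[OF P] distr_uniform_quantile_cdf_of[OF Q])
qed

lemma is_coupling_prob_space: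
  assumes "is_coupling \<pi> P Q" "prob_density P"
  shows "prob_space \<pi>"
proof
  have sets: "sets \<pi> = sets borel" using assms(1) by (simp add: is_coupling_def)
  have "fst \<in> measurable \<pi> (borel :: real measure)"
    by (simp add: measurable_cong_sets[OF sets refl])
  then have "emeasure (distr \<pi> borel fst) UNIV = emeasure \<pi> (space \<pi>)"
    by (simp add: emeasure_distr)
  then have "emeasure \<pi> (space \<pi>) = emeasure (distr \<pi> borel fst) UNIV" ..
  also have "\<dots> = 1"
    using assms prob_space.emeasure_space_1[OF real_distribution.axioms(1)[OF real_distribution_density]]
    by (simp add: is_coupling_def)
  finally show "emeasure \<pi> (space \<pi>) = 1" .
qed

lemma ennreal_output_density:
  assumes [measurable]: "N \<in> borel_measurable borel"
    and N_nonneg: "\<And>z. 0 \<le> N z" and N_bounded: "\<And>z. N z \<le> B" and P: "prob_density P"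
  shows "ennreal (output_density N P y) = (\<integral>\<^sup>+ x. N (y - x) \<partial>density lborel P)"
proof -
  have [measurable]: "P \<in> borel_measurable borel" and P_nonneg: "\<And>x. 0 \<le> P x"
    using P by (auto simp: prob_density_def)
  have integrand: "(\<integral>\<^sup>+ x. ennreal (N (y - x) * P x) \<partial>lborel) = (\<integral>\<^sup>+ x. N (y - x) \<partial>density lborel P)"
    by (simp add: nn_integral_density ennreal_mult'' N_nonneg mult.commute)
  have "(\<integral>\<^sup>+ x. N (y - x) \<partial>density lborel P) \<le> (\<integral>\<^sup>+ x. ennreal B \<partial>density lborel P)"
    by (intro nn_integral_mono ennreal_leI N_bounded)
  also have "\<dots> = ennreal B"
    using prob_space.emeasure_space_1[OF real_distribution.axioms(1)[OF real_distribution_density[OF P]]]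
    by simp
  finally have finite: "(\<integral>\<^sup>+ x. N (y - x) \<partial>density lborel P) < \<infinity>"
    using le_less_trans by fastforce
  have "output_density N P y = enn2real (\<integral>\<^sup>+ x. ennreal (N (y - x) * P x) \<partial>lborel)"
    unfolding output_density_def by (rule integral_eq_nn_integral) (auto simp: N_nonneg P_nonneg)
  then show ?thesis using finite integrand by simp
qed

lemma young_powr_perspective:
  fixes a b t \<alpha> :: real
  assumes "a \<ge> 0" "b > 0" "t > 0" "\<alpha> > 1"
  shows "\<alpha> * t powr (\<alpha> - 1) * a \<le> a powr \<alpha> * b powr (1 - \<alpha>) + (\<alpha> - 1) * t powr \<alpha> * b"
proof (cases "a = 0")
  case True then show ?thesis using assms by simp
next
  case False
  then have a: "a > 0" using assms by simp
  define q where "q = \<alpha> / (\<alpha> - 1)"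
  have q1: "q > 1" and pq: "1/\<alpha> + 1/q = 1" using assms by (auto simp: q_def field_simps)
  have Y: "(a / b) * t powr (\<alpha> - 1) \<le> (a/b) powr \<alpha> / \<alpha> + (t powr (\<alpha> - 1)) powr q / q"
    by (rule Youngs_inequality) (use assms q1 pq in auto)
  have tq: "(t powr (\<alpha> - 1)) powr q = t powr \<alpha>"
    using assms by (simp add: powr_powr q_def)
  have ab: "b * (a / b) powr \<alpha> = a powr \<alpha> * b powr (1 - \<alpha>)"
    using assms a by (simp add: powr_divide powr_diff)
  have "\<alpha> * t powr (\<alpha> - 1) * a = (\<alpha> * b) * ((a / b) * t powr (\<alpha> - 1))"
    using assms by (simp add: field_simps)
  also have "\<dots> \<le> (\<alpha> * b) * ((a/b) powr \<alpha> / \<alpha> + t powr \<alpha> / q)"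
    using Y tq assms by (intro mult_left_mono) auto
  also have "\<dots> = b * (a / b) powr \<alpha> + (\<alpha> - 1) * t powr \<alpha> * b"
    using assms by (simp add: q_def field_simps)
  finally show ?thesis using ab by simp
qed

text \<open>Jensen's inequality for the jointly convex map (a, b) \<mapsto> a^\<alpha> b^(1-\<alpha>): integrate its
  supporting hyperplane at (A, B), which is the previous lemma with t = A / B.\<close>
lemma powr_perspective_le_nn_integral:
  fixes a b :: "'a \<Rightarrow> real" and \<alpha> A B :: real
  assumes [measurable]: "a \<in> borel_measurable M" "b \<in> borel_measurable M"
    and a_nonneg: "\<And>x. a x \<ge> 0" and b_pos: "\<And>x. b x > 0" and \<alpha>: "\<alpha> > 1"
    and A: "A > 0" "(\<integral>\<^sup>+ x. a x \<partial>M) = A"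
    and B: "B > 0" "(\<integral>\<^sup>+ x. b x \<partial>M) = B"
  shows "ennreal (A powr \<alpha> * B powr (1 - \<alpha>)) \<le> (\<integral>\<^sup>+ x. ennreal (a x powr \<alpha> * b x powr (1 - \<alpha>)) \<partial>M)"
proof -
  define t where "t = A / B"
  have t: "t > 0" using A B by (simp add: t_def)
  define K where "K = A powr \<alpha> * B powr (1 - \<alpha>)"
  define X where "X = (\<integral>\<^sup>+ x. ennreal (a x powr \<alpha> * b x powr (1 - \<alpha>)) \<partial>M)"
  have slope_A: "\<alpha> * t powr (\<alpha> - 1) * A = \<alpha> * K" and slope_B: "(\<alpha> - 1) * t powr \<alpha> * B = (\<alpha> - 1) * K"
    using A B unfolding K_def t_def by (simp_all add: powr_divide powr_diff)
  have "ennreal (\<alpha> * t powr (\<alpha> - 1)) * ennreal A = (\<integral>\<^sup>+ x. ennreal (\<alpha> * t powr (\<alpha> - 1)) * a x \<partial>M)"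
    using A by (simp add: nn_integral_cmult)
  also have "\<dots> \<le> (\<integral>\<^sup>+ x. ennreal (a x powr \<alpha> * b x powr (1 - \<alpha>)) + ennreal ((\<alpha> - 1) * t powr \<alpha>) * b x \<partial>M)"
  proof (rule nn_integral_mono)
    fix x
    show "ennreal (\<alpha> * t powr (\<alpha> - 1)) * a x
        \<le> ennreal (a x powr \<alpha> * b x powr (1 - \<alpha>)) + ennreal ((\<alpha> - 1) * t powr \<alpha>) * b x"
      using young_powr_perspective[OF a_nonneg b_pos t \<alpha>, of x] \<alpha> a_nonneg[of x] b_pos[of x]
      by (simp add: ennreal_mult'[symmetric] ennreal_plus[symmetric] del: ennreal_plus)
  qed
  also have "\<dots> = X + ennreal ((\<alpha> - 1) * t powr \<alpha>) * ennreal B"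
    unfolding X_def using B by (subst nn_integral_add) (auto simp: nn_integral_cmult)
  finally have "ennreal (\<alpha> * K) \<le> X + ennreal ((\<alpha> - 1) * K)"
    using \<alpha> t A B slope_A slope_B by (simp add: ennreal_mult'[symmetric])
  then have "ennreal K \<le> X"
  proof (cases X)
    case (real x)
    with \<open>ennreal (\<alpha> * K) \<le> X + ennreal ((\<alpha> - 1) * K)\<close> have "\<alpha> * K \<le> x + (\<alpha> - 1) * K"
      using \<alpha> by (simp add: K_def ennreal_plus[symmetric] del: ennreal_plus)
    then show ?thesis using real by (simp add: algebra_simps)
  qed simp
  then show ?thesis unfolding K_def X_def .
qed

lemma renyi_div_le_if_nn_integral_le:
  assumes \<alpha>: "\<alpha> > 1" and \<epsilon>: "\<epsilon> \<ge> 0"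
    and bound: "(\<integral>\<^sup>+ x. ennreal (P x powr \<alpha> * Q x powr (1 - \<alpha>)) \<partial>lborel) \<le> exp ((\<alpha> - 1) * \<epsilon>)"
  shows "renyi_div \<alpha> P Q \<le> ereal \<epsilon>"
proof -
  define I where "I = (\<integral>\<^sup>+ x. ennreal (P x powr \<alpha> * Q x powr (1 - \<alpha>)) \<partial>lborel)"
  have "I \<noteq> \<infinity>" using bound by (auto simp: I_def top_unique)
  have I_le: "enn2real I \<le> exp ((\<alpha> - 1) * \<epsilon>)"
    using enn2real_mono[OF bound] by (simp add: I_def)
  have "ln (enn2real I) / (\<alpha> - 1) \<le> \<epsilon>"
  proof (cases "enn2real I > 0")
    case True
    then have "ln (enn2real I) \<le> (\<alpha> - 1) * \<epsilon>" using I_le by (metis ln_exp ln_le_cancel_iff exp_gt_zero)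
    then show ?thesis using \<alpha> by (simp add: divide_le_eq mult.commute)
  next
    case False
    then have "enn2real I = 0" using enn2real_nonneg[of I] by linarith
    then show ?thesis using \<epsilon> by simp \<comment> \<open>ln 0 = 0\<close>
  qed
  then show ?thesis
    using \<open>I \<noteq> \<infinity>\<close> by (simp add: renyi_div_def Let_def I_def[symmetric])
qed

locale cost_noise =
  fixes c :: "real \<Rightarrow> real" and \<kappa> \<theta> :: real
  assumes c_meas [measurable]: "c \<in> borel_measurable borel"
    and c_nonneg: "\<And>z. 0 \<le> c z"
    and kappa_pos: "0 < \<kappa>" and theta_pos: "0 < \<theta>"
    and normalizable: "integrable lborel (\<lambda>u. exp (- eta \<kappa> \<theta> * c u))"
begin

definition normalizer :: real where
  "normalizer = (LINT u|lborel. exp (- eta \<kappa> \<theta> * c u))"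

lemma eta_pos: "0 < eta \<kappa> \<theta>"
  using kappa_pos theta_pos by (simp add: eta_def)

lemma nn_integral_exp_cost_eq_normalizer: "(\<integral>\<^sup>+ u. exp (- eta \<kappa> \<theta> * c u) \<partial>lborel) = normalizer"
  unfolding normalizer_def by (rule nn_integral_eq_integral[OF normalizable]) auto

lemma normalizer_pos: "0 < normalizer"
proof -
  have "(\<integral>\<^sup>+ u. exp (- eta \<kappa> \<theta> * c u) \<partial>lborel) \<noteq> 0"
    by (subst nn_integral_0_iff_AE) (auto simp: AE_iff_measurable[OF _ refl])
  then show ?thesis
    using nn_integral_exp_cost_eq_normalizer by (simp add: ennreal_eq_0_iff not_le)
qed

lemma noise_density_eq: "noise_density c \<kappa> \<theta> z = exp (- eta \<kappa> \<theta> * c z) / normalizer"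
  by (simp add: noise_density_def normalizer_def)

lemma noise_density_pos: "0 < noise_density c \<kappa> \<theta> z"
  using normalizer_pos by (simp add: noise_density_eq)

lemma noise_density_le: "noise_density c \<kappa> \<theta> z \<le> 1 / normalizer"
  using normalizer_pos eta_pos c_nonneg[of z]
  by (simp add: noise_density_eq divide_right_mono)

lemma borel_measurable_noise_density [measurable]: "noise_density c \<kappa> \<theta> \<in> borel_measurable borel"
  unfolding noise_density_def by measurable

lemma prob_density_noise_density: "prob_density (noise_density c \<kappa> \<theta>)"
proof -
  have "(\<integral>\<^sup>+ z. noise_density c \<kappa> \<theta> z \<partial>lborel)
      = (\<integral>\<^sup>+ z. ennreal (1 / normalizer) * exp (- eta \<kappa> \<theta> * c z) \<partial>lborel)"
    using normalizer_pos by (intro nn_integral_cong) (simp add: noise_density_eq ennreal_mult'[symmetric])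
  also have "\<dots> = ennreal (1 / normalizer) * normalizer"
    unfolding nn_integral_exp_cost_eq_normalizer[symmetric] by (simp add: nn_integral_cmult)
  also have "\<dots> = 1"
    using normalizer_pos by (simp add: ennreal_mult'[symmetric])
  finally show ?thesis
    using noise_density_pos by (auto simp: prob_density_def less_imp_le)
qed

lemma nn_integral_noise_density_shift_powr:
  assumes c_tri: "\<And>z a. c z \<le> c a + c (z - a)" and \<alpha>: "1 \<le> \<alpha>"
  shows "(\<integral>\<^sup>+ y. ennreal (noise_density c \<kappa> \<theta> (y - x) powr \<alpha>
                       * noise_density c \<kappa> \<theta> (y - x') powr (1 - \<alpha>)) \<partial>lborel)
    \<le> exp ((\<alpha> - 1) * eta \<kappa> \<theta> * c (x - x'))"
proof -
  let ?N = "noise_density c \<kappa> \<theta>" and ?\<eta> = "eta \<kappa> \<theta>"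
  have ln_N: "ln (?N z) = - ?\<eta> * c z - ln normalizer" for z
    using normalizer_pos by (simp add: noise_density_eq ln_div)
  have "(\<integral>\<^sup>+ y. ennreal (?N (y - x) powr \<alpha> * ?N (y - x') powr (1 - \<alpha>)) \<partial>lborel)
      = (\<integral>\<^sup>+ z. ennreal (?N z powr \<alpha> * ?N (z + (x - x')) powr (1 - \<alpha>)) \<partial>lborel)"
    using nn_integral_real_affine[of "\<lambda>y. ennreal (?N (y - x) powr \<alpha> * ?N (y - x') powr (1 - \<alpha>))" 1 x]
    by (simp add: algebra_simps)
  also have "\<dots> \<le> (\<integral>\<^sup>+ z. ennreal (exp ((\<alpha> - 1) * ?\<eta> * c (x - x'))) * ?N z \<partial>lborel)"
  proof (rule nn_integral_mono)
    fix z
    have "(\<alpha> - 1) * ?\<eta> * (c (z + (x - x')) - c z) \<le> (\<alpha> - 1) * ?\<eta> * c (x - x')"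
      using c_tri[of "z + (x - x')" z] \<alpha> eta_pos by (intro mult_left_mono) auto
    then have "\<alpha> * ln (?N z) + (1 - \<alpha>) * ln (?N (z + (x - x'))) \<le> (\<alpha> - 1) * ?\<eta> * c (x - x') + ln (?N z)"
      by (simp add: ln_N algebra_simps)
    then have "exp (\<alpha> * ln (?N z) + (1 - \<alpha>) * ln (?N (z + (x - x'))))
        \<le> exp ((\<alpha> - 1) * ?\<eta> * c (x - x') + ln (?N z))"
      by simp
    then have "?N z powr \<alpha> * ?N (z + (x - x')) powr (1 - \<alpha>) \<le> exp ((\<alpha> - 1) * ?\<eta> * c (x - x')) * ?N z"
      using noise_density_pos[of z] noise_density_pos[of "z + (x - x')"]
      by (simp add: powr_def exp_add)
    then show "ennreal (?N z powr \<alpha> * ?N (z + (x - x')) powr (1 - \<alpha>))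
        \<le> ennreal (exp ((\<alpha> - 1) * ?\<eta> * c (x - x'))) * ?N z"
      by (simp add: ennreal_mult'[symmetric] ennreal_leI)
  qed
  also have "\<dots> = exp ((\<alpha> - 1) * ?\<eta> * c (x - x'))"
    using prob_density_noise_density by (simp add: nn_integral_cmult prob_density_def)
  finally show ?thesis .
qed

end

lemma nn_integral_coupling_marginals:
  assumes \<pi>: "is_coupling \<pi> P Q" and [measurable]: "f \<in> borel_measurable borel"
  shows "(\<integral>\<^sup>+ p. f (fst p) \<partial>\<pi>) = (\<integral>\<^sup>+ x. f x \<partial>density lborel P)"
    and "(\<integral>\<^sup>+ p. f (snd p) \<partial>\<pi>) = (\<integral>\<^sup>+ x. f x \<partial>density lborel Q)"
proof -
  have [measurable_cong]: "sets \<pi> = sets borel" using \<pi> by (simp add: is_coupling_def)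
  have "(\<integral>\<^sup>+ x. f x \<partial>distr \<pi> borel fst) = (\<integral>\<^sup>+ p. f (fst p) \<partial>\<pi>)"
    "(\<integral>\<^sup>+ x. f x \<partial>distr \<pi> borel snd) = (\<integral>\<^sup>+ p. f (snd p) \<partial>\<pi>)"
    by (simp_all add: nn_integral_distr)
  then show "(\<integral>\<^sup>+ p. f (fst p) \<partial>\<pi>) = (\<integral>\<^sup>+ x. f x \<partial>density lborel P)"
    and "(\<integral>\<^sup>+ p. f (snd p) \<partial>\<pi>) = (\<integral>\<^sup>+ x. f x \<partial>density lborel Q)"
    using \<pi> by (simp_all add: is_coupling_def)
qed

context cost_noise
begin

lemma ennreal_output_density_coupling:
  assumes \<pi>: "is_coupling \<pi> P Q" and P: "prob_density P" and Q: "prob_density Q"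
  shows "ennreal (output_density (noise_density c \<kappa> \<theta>) P y)
           = (\<integral>\<^sup>+ p. noise_density c \<kappa> \<theta> (y - fst p) \<partial>\<pi>)"
    and "ennreal (output_density (noise_density c \<kappa> \<theta>) Q y)
           = (\<integral>\<^sup>+ p. noise_density c \<kappa> \<theta> (y - snd p) \<partial>\<pi>)"
  using nn_integral_coupling_marginals[OF \<pi>, of "\<lambda>x. noise_density c \<kappa> \<theta> (y - x)"]
    ennreal_output_density[OF borel_measurable_noise_density _ noise_density_le P, of y]
    ennreal_output_density[OF borel_measurable_noise_density _ noise_density_le Q, of y]
  by (simp_all add: less_imp_le noise_density_pos)

lemma nn_integral_output_density_powr_le:
  assumes c_tri: "\<And>z a. c z \<le> c a + c (z - a)" and \<alpha>: "1 < \<alpha>"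
    and P: "prob_density P" and Q: "prob_density Q" and \<pi>: "is_coupling \<pi> P Q"
  shows "(\<integral>\<^sup>+ y. ennreal (output_density (noise_density c \<kappa> \<theta>) P y powr \<alpha>
                       * output_density (noise_density c \<kappa> \<theta>) Q y powr (1 - \<alpha>)) \<partial>lborel)
    \<le> (\<integral>\<^sup>+ p. exp ((\<alpha> - 1) * eta \<kappa> \<theta> * c (fst p - snd p)) \<partial>\<pi>)"
proof -
  let ?N = "noise_density c \<kappa> \<theta>"
  let ?PY = "output_density ?N P" and ?QY = "output_density ?N Q"
  define G where "G y p = ennreal (?N (y - fst p) powr \<alpha> * ?N (y - snd p) powr (1 - \<alpha>))" for y p
  have [measurable_cong]: "sets \<pi> = sets borel" using \<pi> by (simp add: is_coupling_def)
  have \<pi>_prob: "prob_space \<pi>" by (rule is_coupling_prob_space[OF \<pi> P])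
  have PY_nonneg: "0 \<le> output_density ?N R y" if "prob_density R" for R y
    using that noise_density_pos unfolding output_density_def prob_density_def
    by (intro integral_nonneg_AE AE_I2 mult_nonneg_nonneg) (auto intro: less_imp_le)
  have mixture: "ennreal (?PY y powr \<alpha> * ?QY y powr (1 - \<alpha>)) \<le> (\<integral>\<^sup>+ p. G y p \<partial>\<pi>)" for y
  proof (cases "?PY y > 0 \<and> ?QY y > 0")
    case True
    show ?thesis unfolding G_def
      by (rule powr_perspective_le_nn_integral)
        (use True \<alpha> ennreal_output_density_coupling[OF \<pi> P Q] noise_density_pos in \<open>auto intro: less_imp_le\<close>)
  next
    case False
    then have "?PY y = 0 \<or> ?QY y = 0" using PY_nonneg[OF P, of y] PY_nonneg[OF Q, of y] by auto
    then show ?thesis by auto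
  qed
  have "pair_sigma_finite \<pi> lborel"
    using prob_space_imp_sigma_finite[OF \<pi>_prob] lborel.sigma_finite_measure_axioms
    by (auto simp: pair_sigma_finite_def)
  then have Fubini: "(\<integral>\<^sup>+ y. (\<integral>\<^sup>+ p. G y p \<partial>\<pi>) \<partial>lborel) = (\<integral>\<^sup>+ p. (\<integral>\<^sup>+ y. G y p \<partial>lborel) \<partial>\<pi>)"
    by (rule pair_sigma_finite.Fubini'[where f="\<lambda>p y. G y p"]) (unfold G_def, measurable)
  have "(\<integral>\<^sup>+ y. ennreal (?PY y powr \<alpha> * ?QY y powr (1 - \<alpha>)) \<partial>lborel) \<le> (\<integral>\<^sup>+ y. (\<integral>\<^sup>+ p. G y p \<partial>\<pi>) \<partial>lborel)"
    by (intro nn_integral_mono mixture)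
  also have "\<dots> = (\<integral>\<^sup>+ p. (\<integral>\<^sup>+ y. G y p \<partial>lborel) \<partial>\<pi>)"
    by (rule Fubini)
  also have "\<dots> \<le> (\<integral>\<^sup>+ p. exp ((\<alpha> - 1) * eta \<kappa> \<theta> * c (fst p - snd p)) \<partial>\<pi>)"
    unfolding G_def
    by (intro nn_integral_mono nn_integral_noise_density_shift_powr[OF c_tri]) (use \<alpha> in auto)
  finally show ?thesis .
qed

lemma renyi_div_output_density_le:
  assumes c_tri: "\<And>z a. c z \<le> c a + c (z - a)" and \<alpha>: "1 < \<alpha>" and \<epsilon>: "0 \<le> \<epsilon>"
    and P: "prob_density P" and Q: "prob_density Q" and \<pi>: "is_coupling \<pi> P Q"
    and bound: "(\<integral>\<^sup>+ p. exp ((\<alpha> - 1) * eta \<kappa> \<theta> * c (fst p - snd p)) \<partial>\<pi>) \<le> exp ((\<alpha> - 1) * \<epsilon>)"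
  shows "renyi_div \<alpha> (output_density (noise_density c \<kappa> \<theta>) P) (output_density (noise_density c \<kappa> \<theta>) Q)
    \<le> ereal \<epsilon>"
  using \<alpha> \<epsilon> order_trans[OF nn_integral_output_density_powr_le[OF c_tri \<alpha> P Q \<pi>] bound]
  by (rule renyi_div_le_if_nn_integral_le)

end

theorem corollary1:
  fixes \<epsilon> \<alpha> \<kappa> \<theta> :: real
    and c :: "real \<Rightarrow> real"
    and SS :: "('s \<times> 's) set"
    and Rho :: "'r set"
    and PX :: "'s \<Rightarrow> 'r \<Rightarrow> real \<Rightarrow> real"
    and th :: "'s \<Rightarrow> 's \<Rightarrow> 'r \<Rightarrow> real"
  assumes eps: "\<epsilon> > 0"
    and alpha: "\<alpha> > 1"
    and kappa: "\<kappa> > 0"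
    and c_meas: "c \<in> borel_measurable borel"
    and c_nonneg: "\<And>z. c z \<ge> 0"
    and c_sym: "\<And>z. c z = c (- z)"
    and c_tri: "\<And>z a. c z \<le> c a + c (z - a)"
    and PX_meas: "\<And>s \<rho>. PX s \<rho> \<in> borel_measurable borel"
    and PX_nonneg: "\<And>s \<rho> x. PX s \<rho> x \<ge> 0"
    and PX_prob: "\<And>s \<rho>. (\<integral>\<^sup>+ x. ennreal (PX s \<rho> x) \<partial>lborel) = 1"
    and th_pos: "\<And>si sj \<rho>. (si, sj) \<in> SS \<Longrightarrow> \<rho> \<in> Rho \<Longrightarrow> th si sj \<rho> > 0"
    and th_eq: "\<And>si sj \<rho>. (si, sj) \<in> SS \<Longrightarrow> \<rho> \<in> Rho \<Longrightarrow>
        (\<integral>\<^sup>+ p. ennreal (exp (\<alpha> * eta \<kappa> (th si sj \<rho>) * c (fst p - snd p)))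
           \<partial>comonotone_coupling (PX si \<rho>) (PX sj \<rho>))
        = ennreal (exp ((\<alpha> - 1) * \<epsilon>))"
    and theta_attained: "\<exists>(si, sj)\<in>SS. \<exists>\<rho>\<in>Rho. \<theta> = th si sj \<rho>"
    and theta_max: "\<And>si sj \<rho>. (si, sj) \<in> SS \<Longrightarrow> \<rho> \<in> Rho \<Longrightarrow> th si sj \<rho> \<le> \<theta>"
    and normalizable: "integrable lborel (\<lambda>u. exp (- eta \<kappa> \<theta> * c u))"
  shows "renyi_pufferfish_private \<alpha> \<epsilon> SS Rho
           (\<lambda>s \<rho>. output_density (noise_density c \<kappa> \<theta>) (PX s \<rho>))"
proof -
  from theta_attained have "\<theta> > 0" using th_pos by auto
  then interpret cost_noise c \<kappa> \<theta>
    using c_meas c_nonneg kappa normalizable by unfold_locales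
  have PX_density: "prob_density (PX s \<rho>)" for s \<rho>
    using PX_meas PX_nonneg PX_prob by (simp add: prob_density_def)
  show ?thesis
    unfolding renyi_pufferfish_private_def
  proof (intro ballI, clarify)
    fix \<rho> si sj assume pair: "(si, sj) \<in> SS" and \<rho>: "\<rho> \<in> Rho"
    have "eta \<kappa> \<theta> \<le> eta \<kappa> (th si sj \<rho>)"
      using kappa th_pos[OF pair \<rho>] theta_max[OF pair \<rho>] by (simp add: eta_def frac_le)
    then have "(\<alpha> - 1) * eta \<kappa> \<theta> * c z \<le> \<alpha> * eta \<kappa> (th si sj \<rho>) * c z" for z
      using alpha eta_pos c_nonneg[of z] by (intro mult_right_mono mult_mono) auto
    then have "(\<integral>\<^sup>+ p. exp ((\<alpha> - 1) * eta \<kappa> \<theta> * c (fst p - snd p))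
                 \<partial>comonotone_coupling (PX si \<rho>) (PX sj \<rho>)) \<le> exp ((\<alpha> - 1) * \<epsilon>)"
      unfolding th_eq[OF pair \<rho>, symmetric] by (intro nn_integral_mono ennreal_leI) simp
    then show "renyi_div \<alpha> (output_density (noise_density c \<kappa> \<theta>) (PX si \<rho>))
        (output_density (noise_density c \<kappa> \<theta>) (PX sj \<rho>)) \<le> ereal \<epsilon>"
      using eps by (intro renyi_div_output_density_le[OF c_tri alpha _ PX_density PX_density
          is_coupling_comonotone_coupling[OF PX_density PX_density]]) auto
  qed
qed

end
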